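(* Assume the standing setting below. Let $\alpha\in(0,1/6]$ with $\alpha n$ an integer, let $P_1\subseteq X$ with $|P_1|=\alpha n$, let $\beta\ge1$, and let $T_\alpha\subseteq P_1$ with $|T_\alpha|\le k_+$ satisfy $R(P_1,T_\alpha)\le\beta\min\{R(P_1,T):T\subseteq P_1,|T|\le k_+\}$. Let $\mathcal{B}_a$ be a $(\phi_\alpha/15)$-linear bin division of $X$ with respect to $\mathrm{OPT}$. Suppose $\mathcal{B}_a$ is trivial or well-represented in $P_1$ for $X$, and that for every $i$ with $|C_i^*|\ge\phi_\alpha$, $C_i^*$ is well-represented in $P_1$ for $X$. Then $$R(X^\alpha_{\mathrm{large}},T_\alpha)\le(18\beta+10)\,R(X,\mathrm{OPT}).$$
   Context: Standing setting: $(X,\rho)$ is a finite metric space with $|X|=n$; $k\ge 2$ is an integer and $\delta\in(0,1)$; $\log$ is the natural logarithm; $k_+:=k+38\log(32k/\delta)$. For nonempty $T\subseteq X$, $\rho(x,T):=\min_{y\in T}\rho(x,y)$ and $R(S,T):=\sum_{x\in S}\rho(x,T)$; ties are broken by a fixed ordering. $\mathrm{OPT}=\{c_1^*,\ldots,c_k^*\}$ is a set of at most $k$ points of $X$ minimizing $R(X,\cdot)$, and $C_i^*:=\{x\in X: i=\arg\min_{j\in[k]}\rho(c_j^*,x)\}$. For $\alpha>0$, $\phi_\alpha:=150\log(32k/\delta)/\alpha$; $X^\alpha_{\mathrm{large}}:=\bigcup\{C_i^*:|C_i^*|\ge\phi_\alpha\}$. For finite $W$, $A,B\subseteq W$, $B$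 is well-represented in $A$ for $W$ if $|B\cap A|/|B|\in[r/2,\frac32 r]$ with $r=|A|/|W|$; a bin division is well-represented if all its bins are. A $z$-linear bin division ($z>0$) of $W$ with respect to $T$ is a partition $(\mathcal{B}(1),\ldots,\mathcal{B}(L))$ of $W$ with: (1) if $z\le|W|$, $|\mathcal{B}(i)|\ge z(i+1)/2$ for all $i$; otherwise it is trivial, $\mathcal{B}(1):=W$; (2) $|\mathcal{B}(1)|\le\frac52 z$; (3) $|\mathcal{B}(i+1)|/|\mathcal{B}(i)|\le3/2$; (4) $\rho(x,T)\ge\rho(x',T)$ whenever $x\in\mathcal{B}(i)$, $x'\in\mathcal{B}(i+1)$. *)

theory Defs
  imports Complex_Main
begin

definition finite_metric :: "'a set \<Rightarrow> ('a \<Rightarrow> 'a \<Rightarrow> real) \<Rightarrow> bool" where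
  "finite_metric X \<rho> \<longleftrightarrow> finite X \<and> X \<noteq> {} \<and>
     (\<forall>x\<in>X. \<forall>y\<in>X. \<rho> x y \<ge> 0 \<and> (\<rho> x y = 0 \<longleftrightarrow> x = y) \<and> \<rho> x y = \<rho> y x) \<and>
     (\<forall>x\<in>X. \<forall>y\<in>X. \<forall>z\<in>X. \<rho> x z \<le> \<rho> x y + \<rho> y z)"

definition distS :: "('a \<Rightarrow> 'a \<Rightarrow> real) \<Rightarrow> 'a \<Rightarrow> 'a set \<Rightarrow> real" where
  "distS \<rho> x T = Min ((\<rho> x) ` T)"

definition Rcost :: "('a \<Rightarrow> 'a \<Rightarrow> real) \<Rightarrow> 'a set \<Rightarrow> 'a set \<Rightarrow> real" where
  "Rcost \<rho> S T = (\<Sum>x\<in>S. distS \<rho> x T)"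

definition kplus :: "nat \<Rightarrow> real \<Rightarrow> real" where
  "kplus k \<delta> = real k + 38 * ln (32 * real k / \<delta>)"

definition phi :: "nat \<Rightarrow> real \<Rightarrow> real \<Rightarrow> real" where
  "phi k \<delta> \<alpha> = 150 * ln (32 * real k / \<delta>) / \<alpha>"

text \<open>Optimal clusters C_i^*: centers c 1, ..., c k; x belongs to the cluster of the
  index j in {1..k} minimising rho(c_j, x), ties broken by the smallest index.\<close>
definition cluster :: "'a set \<Rightarrow> ('a \<Rightarrow> 'a \<Rightarrow> real) \<Rightarrow> nat \<Rightarrow> (nat \<Rightarrow> 'a) \<Rightarrow> nat \<Rightarrow> 'a set" where
  "cluster X \<rho> k c i = {x \<in> X. i = (LEAST j. j \<in> {1..k} \<and> (\<forall>j'\<in>{1..k}. \<rho> (c j) x \<le> \<rho> (c j') x))}"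

definition Xlarge :: "'a set \<Rightarrow> ('a \<Rightarrow> 'a \<Rightarrow> real) \<Rightarrow> nat \<Rightarrow> (nat \<Rightarrow> 'a) \<Rightarrow> real \<Rightarrow> real \<Rightarrow> 'a set" where
  "Xlarge X \<rho> k c \<delta> \<alpha> = \<Union>{cluster X \<rho> k c i | i. i \<in> {1..k} \<and> real (card (cluster X \<rho> k c i)) \<ge> phi k \<delta> \<alpha>}"

definition well_represented :: "'a set \<Rightarrow> 'a set \<Rightarrow> 'a set \<Rightarrow> bool" where
  "well_represented W A B \<longleftrightarrow>
     (let r = real (card A) / real (card W) in
       real (card (B \<inter> A)) / real (card B) \<in> {r / 2 .. 3 / 2 * r})"

definition linear_bin_division ::
  "('a \<Rightarrow> 'a \<Rightarrow> real) \<Rightarrow> real \<Rightarrow> 'a set \<Rightarrow> 'a set \<Rightarrow> nat \<Rightarrow> (nat \<Rightarrow> 'a set) \<Rightarrow> bool" where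
  "linear_bin_division \<rho> z W T L B \<longleftrightarrow>
     z > 0 \<and> L \<ge> 1 \<and>
     (\<Union>i\<in>{1..L}. B i) = W \<and>
     (\<forall>i\<in>{1..L}. \<forall>j\<in>{1..L}. i \<noteq> j \<longrightarrow> B i \<inter> B j = {}) \<and>
     (if z \<le> real (card W) then (\<forall>i\<in>{1..L}. real (card (B i)) \<ge> z * (real i + 1) / 2)
      else (L = 1 \<and> B 1 = W)) \<and>
     real (card (B 1)) \<le> 5 / 2 * z \<and>
     (\<forall>i. 1 \<le> i \<and> i < L \<longrightarrow> real (card (B (i + 1))) / real (card (B i)) \<le> 3 / 2) \<and>
     (\<forall>i. 1 \<le> i \<and> i < L \<longrightarrow> (\<forall>x\<in>B i. \<forall>x'\<in>B (i + 1). distS \<rho> x T \<ge> distS \<rho> x' T))"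

definition trivial_division :: "real \<Rightarrow> 'a set \<Rightarrow> bool" where
  "trivial_division z W \<longleftrightarrow> z > real (card W)"

end

theory Submission
  imports Defs
begin

text \<open>
  Because the bins are sorted by distance to OPT, each bin is at most 3/2 times larger than its
  predecessor and all bins are well-represented in \<open>P\<^sub>1\<close>, every sample point outside the first
  bin can be charged to the average OPT-cost of the preceding bin; hence
  \<open>R(P\<^sub>1 - B(1), OPT) \<le> (9/4) \<alpha> R(X, OPT)\<close>. Projecting OPT onto \<open>P\<^sub>1\<close> and adding the few sample
  points of the first bin yields at most \<open>k\<^sub>+\<close> centres in \<open>P\<^sub>1\<close> whose cost on \<open>P\<^sub>1\<close> is at most
  twice that, so \<open>R(P\<^sub>1, T\<^sub>\<alpha>) \<le> 2\<beta> R(P\<^sub>1 - B(1), OPT)\<close>. A large optimal cluster keeps at least an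
  \<open>\<alpha>/4\<close> fraction of its points in \<open>P\<^sub>1 - B(1)\<close>; routing each of its points through its optimal
  centre and the point of \<open>T\<^sub>\<alpha>\<close> nearest to that centre, its cost under \<open>T\<^sub>\<alpha>\<close> exceeds its
  OPT-cost by at most \<open>4/\<alpha>\<close> times the cost of those sample points under OPT and \<open>T\<^sub>\<alpha>\<close>.
  Summing gives \<open>R(X, OPT) + (4/\<alpha>)(1 + 2\<beta>)(9/4)\<alpha> R(X, OPT)\<close>.
\<close>

lemma finite_metric_finite: "finite_metric X \<rho> \<Longrightarrow> finite X"
  unfolding finite_metric_def by blast

lemma finite_metric_nonneg: "finite_metric X \<rho> \<Longrightarrow> x \<in> X \<Longrightarrow> y \<in> X \<Longrightarrow> 0 \<le> \<rho> x y"
  unfolding finite_metric_def by blast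

lemma finite_metric_self: "finite_metric X \<rho> \<Longrightarrow> x \<in> X \<Longrightarrow> \<rho> x x = 0"
  unfolding finite_metric_def by blast

lemma finite_metric_commute: "finite_metric X \<rho> \<Longrightarrow> x \<in> X \<Longrightarrow> y \<in> X \<Longrightarrow> \<rho> x y = \<rho> y x"
  unfolding finite_metric_def by blast

lemma finite_metric_triangle:
  "finite_metric X \<rho> \<Longrightarrow> x \<in> X \<Longrightarrow> y \<in> X \<Longrightarrow> z \<in> X \<Longrightarrow> \<rho> x z \<le> \<rho> x y + \<rho> y z"
  unfolding finite_metric_def by blast

lemma distS_le: "finite T \<Longrightarrow> t \<in> T \<Longrightarrow> distS \<rho> x T \<le> \<rho> x t"
  unfolding distS_def by (intro Min_le) auto

lemma distS_attained:
  assumes "finite T" "T \<noteq> {}"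
  obtains t where "t \<in> T" "distS \<rho> x T = \<rho> x t"
proof -
  have "Min (\<rho> x ` T) \<in> \<rho> x ` T" using assms by (intro Min_in) auto
  then show ?thesis using that unfolding distS_def by blast
qed

lemma distS_nonneg:
  assumes "finite_metric X \<rho>" "finite T" "T \<noteq> {}" "T \<subseteq> X" "x \<in> X"
  shows "0 \<le> distS \<rho> x T"
  using assms by (metis distS_attained finite_metric_nonneg subsetD)

lemma distS_triangle:
  assumes metric: "finite_metric X \<rho>" and T: "finite T" "T \<noteq> {}" "T \<subseteq> X"
    and "x \<in> X" "y \<in> X"
  shows "distS \<rho> x T \<le> \<rho> x y + distS \<rho> y T"
proof -
  obtain t where t: "t \<in> T" "distS \<rho> y T = \<rho> y t"
    using distS_attained[OF T(1,2)] by blast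
  have "distS \<rho> x T \<le> \<rho> x t" using distS_le[OF T(1) t(1)] .
  also have "\<dots> \<le> \<rho> x y + \<rho> y t"
    using assms t by (intro finite_metric_triangle[OF metric]) auto
  finally show ?thesis using t by simp
qed

lemma Rcost_nonneg:
  assumes "finite_metric X \<rho>" "finite T" "T \<noteq> {}" "T \<subseteq> X" "S \<subseteq> X"
  shows "0 \<le> Rcost \<rho> S T"
  unfolding Rcost_def using assms by (intro sum_nonneg distS_nonneg[of X]) auto

lemma Rcost_mono:
  assumes metric: "finite_metric X \<rho>" and "finite T" "T \<noteq> {}" "T \<subseteq> X" "S \<subseteq> S'" "S' \<subseteq> X"
  shows "Rcost \<rho> S T \<le> Rcost \<rho> S' T"
  unfolding Rcost_def using assms finite_metric_finite[OF metric]
  by (intro sum_mono2 distS_nonneg[OF metric]) (auto intro: finite_subset)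

lemma Rcost_UN_disjoint:
  assumes "finite I" "\<And>i. i \<in> I \<Longrightarrow> finite (S i)"
    and "\<And>i j. i \<in> I \<Longrightarrow> j \<in> I \<Longrightarrow> i \<noteq> j \<Longrightarrow> S i \<inter> S j = {}"
  shows "Rcost \<rho> (\<Union>i\<in>I. S i) T = (\<Sum>i\<in>I. Rcost \<rho> (S i) T)"
  unfolding Rcost_def using assms by (intro sum.UNION_disjoint) auto

lemma sum_le_mean_if_dominated:
  fixes f :: "'a \<Rightarrow> real"
  assumes S: "finite S" "S \<noteq> {}" and dom: "\<And>y x. y \<in> A \<Longrightarrow> x \<in> S \<Longrightarrow> f y \<le> f x"
  shows "sum f A \<le> real (card A) / real (card S) * sum f S"
proof -
  have cardS: "0 < real (card S)" using S by (simp add: card_gt_0_iff)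
  have "\<And>y. y \<in> A \<Longrightarrow> f y \<le> sum f S / real (card S)"
    using sum_bounded_below[of S "f _" f] dom cardS by (simp add: pos_le_divide_eq mult.commute)
  then have "sum f A \<le> real (card A) * (sum f S / real (card S))"
    by (rule sum_bounded_above)
  then show ?thesis by simp
qed

lemma well_represented_card_ge:
  "well_represented W A B \<Longrightarrow>
     real (card A) / real (card W) / 2 * real (card B) \<le> real (card (B \<inter> A))"
  unfolding well_represented_def Let_def
  by (cases "card B = 0") (auto simp: le_divide_eq)

lemma well_represented_card_le:
  assumes "well_represented W A B" "finite B"
  shows "real (card (B \<inter> A)) \<le> 3 / 2 * (real (card A) / real (card W)) * real (card B)"
proof (cases "B = {}")
  case False
  then have "0 < real (card B)" using assms(2) by (simp add: card_gt_0_iff)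
  then show ?thesis using assms(1) unfolding well_represented_def Let_def
    by (auto simp: divide_le_eq)
qed simp

lemma well_represented_Diff_card_ge:
  assumes wr: "well_represented W A K" and E: "finite E"
    and small: "real (card (E \<inter> A)) \<le> real (card A) / real (card W) / 4 * real (card K)"
  shows "real (card A) / real (card W) / 4 * real (card K) \<le> real (card (K \<inter> (A - E)))"
proof -
  have "card (K \<inter> A) - card (E \<inter> A) \<le> card (K \<inter> A - E \<inter> A)"
    using E by (intro diff_card_le_card_Diff) simp
  also have "K \<inter> A - E \<inter> A = K \<inter> (A - E)" by blast
  finally have "real (card (K \<inter> A)) \<le> real (card (K \<inter> (A - E))) + real (card (E \<inter> A))"
    by linarith
  with well_represented_card_ge[OF wr] small show ?thesis by (simp add: Int_commute)
qed

lemma cluster_subset: "cluster X \<rho> k c i \<subseteq> X"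
  unfolding cluster_def by blast

lemma cluster_disjoint: "i \<noteq> j \<Longrightarrow> cluster X \<rho> k c i \<inter> cluster X \<rho> k c j = {}"
  unfolding cluster_def by blast

lemma distS_centers_cluster:
  assumes metric: "finite_metric X \<rho>" and x: "x \<in> cluster X \<rho> k c i"
    and C: "c ` {1..k} \<subseteq> X" and k: "1 \<le> k"
  shows "distS \<rho> x (c ` {1..k}) = \<rho> x (c i)"
proof -
  let ?P = "\<lambda>j. j \<in> {1..k} \<and> (\<forall>j'\<in>{1..k}. \<rho> (c j) x \<le> \<rho> (c j') x)"
  have xX: "x \<in> X" and i: "i = (LEAST j. ?P j)" using x unfolding cluster_def by auto
  have "Min ((\<lambda>j. \<rho> (c j) x) ` {1..k}) \<in> (\<lambda>j. \<rho> (c j) x) ` {1..k}"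
    using k by (intro Min_in) auto
  then obtain j where "j \<in> {1..k}" "\<rho> (c j) x = Min ((\<lambda>j. \<rho> (c j) x) ` {1..k})"
    by auto
  then have "?P j" by auto
  then have Pi: "?P i" unfolding i by (rule LeastI)
  have "\<rho> x (c i) \<le> \<rho> x t" if t: "t \<in> c ` {1..k}" for t
  proof -
    obtain j' where j': "j' \<in> {1..k}" "t = c j'" using t by blast
    have "c i \<in> X" "c j' \<in> X" using Pi j' C by auto
    then show ?thesis using Pi j'
      by (simp add: finite_metric_commute[OF metric xX \<open>c i \<in> X\<close>]
                    finite_metric_commute[OF metric xX \<open>c j' \<in> X\<close>])
  qed
  moreover have "finite (c ` {1..k})" "c ` {1..k} \<noteq> {}" using k by auto
  then obtain t where "t \<in> c ` {1..k}" "distS \<rho> x (c ` {1..k}) = \<rho> x t"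
    by (rule distS_attained)
  moreover have "distS \<rho> x (c ` {1..k}) \<le> \<rho> x (c i)" using Pi by (intro distS_le) auto
  ultimately show ?thesis by fastforce
qed

lemma linear_bin_division_partition:
  assumes "linear_bin_division \<rho> z W T L B"
  shows linear_bin_division_cover: "(\<Union>i\<in>{1..L}. B i) = W"
    and linear_bin_division_disjoint:
      "\<And>i j. i \<in> {1..L} \<Longrightarrow> j \<in> {1..L} \<Longrightarrow> i \<noteq> j \<Longrightarrow> B i \<inter> B j = {}"
  using assms unfolding linear_bin_division_def by auto

lemma Rcost_eq_sum_bins:
  assumes W: "finite W" and bins: "linear_bin_division \<rho> z W T L B"
  shows "Rcost \<rho>' W T' = (\<Sum>i\<in>{1..L}. Rcost \<rho>' (B i) T')"
  unfolding linear_bin_division_cover[OF bins, symmetric]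
  using linear_bin_division_partition[OF bins] W
  by (intro Rcost_UN_disjoint) (auto intro: finite_subset)

lemma Rcost_Diff_first_bin_eq_sum:
  assumes W: "finite W" and bins: "linear_bin_division \<rho> z W T L B" and A: "A \<subseteq> W"
  shows "Rcost \<rho>' (A - B 1) T' = (\<Sum>j\<in>{1..<L}. Rcost \<rho>' (B (Suc j) \<inter> A) T')"
proof -
  note cover = linear_bin_division_cover[OF bins]
    and disj = linear_bin_division_disjoint[OF bins]
  have "A - B 1 = (\<Union>j\<in>{1..<L}. B (Suc j) \<inter> A)"
  proof (intro equalityI subsetI)
    fix x assume x: "x \<in> A - B 1"
    then obtain i where i: "i \<in> {1..L}" "x \<in> B i" using A cover by blast
    moreover have "i \<noteq> 1" using i x by auto
    ultimately show "x \<in> (\<Union>j\<in>{1..<L}. B (Suc j) \<inter> A)" using x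
      by (intro UN_I[of "i - 1"]) auto
  next
    fix x assume "x \<in> (\<Union>j\<in>{1..<L}. B (Suc j) \<inter> A)"
    then obtain j where j: "j \<in> {1..<L}" "x \<in> B (Suc j)" "x \<in> A" by blast
    moreover have "B (Suc j) \<inter> B 1 = {}" using disj[of "Suc j" 1] j(1) by auto
    ultimately show "x \<in> A - B 1" by blast
  qed
  also have "Rcost \<rho>' \<dots> T' = (\<Sum>j\<in>{1..<L}. Rcost \<rho>' (B (Suc j) \<inter> A) T')"
  proof (rule Rcost_UN_disjoint)
    fix i j assume "i \<in> {1..<L}" "j \<in> {1..<L}" "i \<noteq> j"
    then show "B (Suc i) \<inter> A \<inter> (B (Suc j) \<inter> A) = {}" using disj[of "Suc i" "Suc j"] by auto
  qed (use A W in \<open>auto intro: finite_subset\<close>)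
  finally show ?thesis .
qed

lemma Rcost_beyond_first_bin_le:
  assumes metric: "finite_metric X \<rho>" and C: "finite C" "C \<noteq> {}" "C \<subseteq> X"
    and bins: "linear_bin_division \<rho> z X C L B" and nontrivial: "z \<le> real (card X)"
    and A: "A \<subseteq> X" and wr: "\<forall>i\<in>{1..L}. well_represented X A (B i)"
  shows "Rcost \<rho> (A - B 1) C \<le> 9 / 4 * (real (card A) / real (card X)) * Rcost \<rho> X C"
proof -
  define r where "r = real (card A) / real (card X)"
  from bins nontrivial have "0 < z"
    and sizes: "\<And>i. i \<in> {1..L} \<Longrightarrow> z * (real i + 1) / 2 \<le> real (card (B i))"
    and growth: "\<And>i. 1 \<le> i \<Longrightarrow> i < L \<Longrightarrow> real (card (B (Suc i))) / real (card (B i)) \<le> 3 / 2"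
    and sorted: "\<And>i x x'. 1 \<le> i \<Longrightarrow> i < L \<Longrightarrow> x \<in> B i \<Longrightarrow> x' \<in> B (Suc i) \<Longrightarrow>
                   distS \<rho> x' C \<le> distS \<rho> x C"
    unfolding linear_bin_division_def by auto
  have finX: "finite X" using finite_metric_finite[OF metric] .
  have BX: "B i \<subseteq> X" and finB: "finite (B i)" if "i \<in> {1..L}" for i
    using that linear_bin_division_cover[OF bins] finX by (auto intro: finite_subset)
  have Bpos: "0 < real (card (B i))" if "i \<in> {1..L}" for i
  proof -
    have "0 < z * (real i + 1) / 2" using \<open>0 < z\<close> by simp
    with sizes[OF that] show ?thesis by linarith
  qed
  have r0: "0 \<le> r" unfolding r_def by simp
  have RB0: "0 \<le> Rcost \<rho> (B j) C" if "j \<in> {1..L}" for j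
    using Rcost_nonneg[OF metric C BX[OF that]] .
  have bin_step: "Rcost \<rho> (B (Suc j) \<inter> A) C \<le> 9 / 4 * r * Rcost \<rho> (B j) C"
    if j: "j \<in> {1..<L}" for j
  proof -
    have jL: "j \<in> {1..L}" "Suc j \<in> {1..L}" using j by auto
    have "Rcost \<rho> (B (Suc j) \<inter> A) C
            \<le> real (card (B (Suc j) \<inter> A)) / real (card (B j)) * Rcost \<rho> (B j) C"
      unfolding Rcost_def using j Bpos[OF jL(1)]
      by (intro sum_le_mean_if_dominated finB) (auto intro: sorted)
    also have "real (card (B (Suc j) \<inter> A)) \<le> 3 / 2 * r * real (card (B (Suc j)))"
      using well_represented_card_le[OF _ finB] wr jL unfolding r_def by blast
    also have "\<dots> \<le> 3 / 2 * r * (3 / 2 * real (card (B j)))"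
      using growth[of j] j Bpos[OF jL(1)] r0 by (intro mult_left_mono) (auto simp: divide_le_eq)
    finally show ?thesis
      using Bpos[OF jL(1)] RB0[OF jL(1)] by (simp add: divide_right_mono mult_right_mono)
  qed
  have "Rcost \<rho> (A - B 1) C = (\<Sum>j\<in>{1..<L}. Rcost \<rho> (B (Suc j) \<inter> A) C)"
    by (rule Rcost_Diff_first_bin_eq_sum[OF finX bins A])
  also have "\<dots> \<le> (\<Sum>j\<in>{1..<L}. 9 / 4 * r * Rcost \<rho> (B j) C)"
    by (intro sum_mono bin_step)
  also have "\<dots> \<le> (\<Sum>j\<in>{1..L}. 9 / 4 * r * Rcost \<rho> (B j) C)"
    using RB0 r0 by (intro sum_mono2) auto
  also have "\<dots> = 9 / 4 * r * Rcost \<rho> X C"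
    by (simp add: Rcost_eq_sum_bins[OF finX bins] sum_distrib_left)
  finally show ?thesis unfolding r_def .
qed

lemma card_first_bin_Int_le:
  assumes bins: "linear_bin_division \<rho> z W T L B" and wr: "well_represented W A (B 1)"
    and W: "finite W"
  shows "real (card (B 1 \<inter> A)) \<le> 15 / 4 * (real (card A) / real (card W)) * z"
proof -
  have "B 1 \<subseteq> W" and B1: "real (card (B 1)) \<le> 5 / 2 * z"
    using bins unfolding linear_bin_division_def by auto
  then have "real (card (B 1 \<inter> A)) \<le> 3 / 2 * (real (card A) / real (card W)) * real (card (B 1))"
    using W by (intro well_represented_card_le[OF wr]) (rule finite_subset)
  also have "\<dots> \<le> 3 / 2 * (real (card A) / real (card W)) * (5 / 2 * z)"
    using B1 by (intro mult_left_mono) auto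
  finally show ?thesis by simp
qed

lemma exists_subset_Rcost_le_twice:
  assumes metric: "finite_metric X \<rho>" and C: "finite C" "C \<noteq> {}" "C \<subseteq> X"
    and A: "A \<subseteq> X" "A \<noteq> {}" and E: "E \<subseteq> A"
  obtains T where "T \<subseteq> A" "T \<noteq> {}" "card T \<le> card C + card E"
    "Rcost \<rho> A T \<le> 2 * Rcost \<rho> (A - E) C"
proof -
  have finA: "finite A" using A finite_metric_finite[OF metric] by (blast intro: finite_subset)
  have "\<forall>x. \<exists>q\<in>A. \<forall>a\<in>A. \<rho> x q \<le> \<rho> x a"
    by (metis distS_attained[OF finA A(2)] distS_le[OF finA])
  then obtain p where p: "\<And>x. p x \<in> A" "\<And>x a. a \<in> A \<Longrightarrow> \<rho> x (p x) \<le> \<rho> x a" by metis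
  define T where "T = p ` C \<union> E"
  have TA: "T \<subseteq> A" and finT: "finite T" and Tne: "T \<noteq> {}"
    unfolding T_def using p(1) E C finA by (auto intro: finite_subset)
  have "card T \<le> card (p ` C) + card E" unfolding T_def by (rule card_Un_le)
  also have "card (p ` C) \<le> card C" by (rule card_image_le[OF C(1)])
  finally have cardT: "card T \<le> card C + card E" by simp
  have E0: "Rcost \<rho> E T \<le> 0"
    unfolding Rcost_def using metric A E
    by (intro sum_nonpos) (metis T_def UnI2 distS_le[OF finT] finite_metric_self subsetD)
  have twice: "distS \<rho> y T \<le> 2 * distS \<rho> y C" if y: "y \<in> A - E" for y
  proof -
    obtain t where t: "t \<in> C" "distS \<rho> y C = \<rho> y t" using distS_attained[OF C(1,2)] by blast
    have X: "y \<in> X" "t \<in> X" "p t \<in> X" using y t A C p(1) by auto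
    have "distS \<rho> y T \<le> \<rho> y (p t)" using t by (intro distS_le[OF finT]) (auto simp: T_def)
    also have "\<dots> \<le> \<rho> y t + \<rho> t (p t)" using X by (intro finite_metric_triangle[OF metric])
    also have "\<rho> t (p t) \<le> \<rho> t y" using p(2) y by blast
    finally show ?thesis using t X finite_metric_commute[OF metric] by simp
  qed
  have "Rcost \<rho> (A - E) T \<le> 2 * Rcost \<rho> (A - E) C"
    unfolding Rcost_def sum_distrib_left by (rule sum_mono) (rule twice)
  moreover have "Rcost \<rho> A T = Rcost \<rho> (A - E) T + Rcost \<rho> E T"
    unfolding Rcost_def using E finA by (rule sum.subset_diff)
  ultimately have "Rcost \<rho> A T \<le> 2 * Rcost \<rho> (A - E) C" using E0 by linarith
  with TA Tne cardT show ?thesis by (rule that)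
qed

lemma Rcost_approx_le_twice:
  assumes metric: "finite_metric X \<rho>" and C: "finite C" "C \<noteq> {}" "C \<subseteq> X"
    and A: "A \<subseteq> X" "A \<noteq> {}" and \<beta>: "0 \<le> \<beta>"
    and size: "real (card C + card (E \<inter> A)) \<le> K"
    and approx: "\<And>T. T \<subseteq> A \<Longrightarrow> T \<noteq> {} \<Longrightarrow> real (card T) \<le> K \<Longrightarrow>
                   Rcost \<rho> A T\<^sub>0 \<le> \<beta> * Rcost \<rho> A T"
  shows "Rcost \<rho> A T\<^sub>0 \<le> 2 * \<beta> * Rcost \<rho> (A - E) C"
proof -
  have "A - E \<inter> A = A - E" by blast
  then obtain T where T: "T \<subseteq> A" "T \<noteq> {}" "card T \<le> card C + card (E \<inter> A)"
    "Rcost \<rho> A T \<le> 2 * Rcost \<rho> (A - E) C"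
    using exists_subset_Rcost_le_twice[OF metric C A Int_lower2[of E A]] by metis
  have "real (card T) \<le> K" using T(3) size by (meson of_nat_le_iff order_trans)
  then have "Rcost \<rho> A T\<^sub>0 \<le> \<beta> * Rcost \<rho> A T" by (rule approx[OF T(1,2)])
  also have "\<dots> \<le> \<beta> * (2 * Rcost \<rho> (A - E) C)" using T(4) \<beta> by (rule mult_left_mono)
  finally show ?thesis by simp
qed

lemma Rcost_le_via_nearest_center:
  assumes metric: "finite_metric X \<rho>" and T: "finite T" "T \<noteq> {}" "T \<subseteq> X"
    and K: "K \<subseteq> X" and c: "c \<in> X" and near: "\<And>x. x \<in> K \<Longrightarrow> distS \<rho> x C = \<rho> x c"
    and S: "S \<subseteq> K" and \<theta>: "0 < \<theta>" "\<theta> * real (card K) \<le> real (card S)"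
  shows "Rcost \<rho> K T \<le> Rcost \<rho> K C + (Rcost \<rho> S C + Rcost \<rho> S T) / \<theta>"
proof -
  define D where "D = distS \<rho> c T"
  have finK: "finite K" using K finite_metric_finite[OF metric] by (rule finite_subset)
  have D0: "0 \<le> D" unfolding D_def using distS_nonneg[OF metric T c] .
  have "real (card S) * D \<le> (\<Sum>y\<in>S. distS \<rho> y C + distS \<rho> y T)"
  proof (rule sum_bounded_below)
    fix y assume "y \<in> S"
    then have y: "y \<in> K" "y \<in> X" using S K by auto
    show "D \<le> distS \<rho> y C + distS \<rho> y T"
      using distS_triangle[OF metric T c y(2)] near[OF y(1)]
      by (simp add: D_def finite_metric_commute[OF metric c y(2)])
  qed
  then have SD: "real (card S) * D \<le> Rcost \<rho> S C + Rcost \<rho> S T"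
    by (simp add: Rcost_def sum.distrib)
  have "Rcost \<rho> K T \<le> (\<Sum>x\<in>K. distS \<rho> x C + D)"
    unfolding Rcost_def D_def
    using K c near by (intro sum_mono) (metis distS_triangle[OF metric T] subsetD)
  also have "\<dots> = Rcost \<rho> K C + real (card K) * D" by (simp add: Rcost_def sum.distrib)
  also have "real (card K) * D \<le> real (card S) / \<theta> * D"
    using \<theta> D0 by (intro mult_right_mono) (auto simp: le_divide_eq mult.commute)
  also have "\<dots> \<le> (Rcost \<rho> S C + Rcost \<rho> S T) / \<theta>"
    using SD \<theta>(1) by (simp add: divide_right_mono)
  finally show ?thesis by simp
qed

lemma Rcost_UN_clusters_le:
  assumes metric: "finite_metric X \<rho>" and C: "c ` {1..k} \<subseteq> X"
    and T: "finite T" "T \<noteq> {}" "T \<subseteq> X" and A: "A \<subseteq> X" and I: "I \<subseteq> {1..k}"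
    and k: "1 \<le> k"
    and \<theta>: "0 < \<theta>"
    and dense: "\<And>i. i \<in> I \<Longrightarrow>
                  \<theta> * real (card (cluster X \<rho> k c i)) \<le> real (card (cluster X \<rho> k c i \<inter> A))"
  shows "Rcost \<rho> (\<Union>i\<in>I. cluster X \<rho> k c i) T
           \<le> Rcost \<rho> X (c ` {1..k}) + (Rcost \<rho> A (c ` {1..k}) + Rcost \<rho> A T) / \<theta>"
proof -
  let ?C = "c ` {1..k}" and ?K = "cluster X \<rho> k c"
  have finX: "finite X" using finite_metric_finite[OF metric] .
  have finI: "finite I" using I by (rule finite_subset) simp
  have finK: "finite (?K i)" for i using cluster_subset finX by (rule finite_subset)
  have union: "Rcost \<rho> (\<Union>i\<in>I. S i) T' = (\<Sum>i\<in>I. Rcost \<rho> (S i) T')"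
    if sub: "\<And>i. S i \<subseteq> ?K i" for S :: "nat \<Rightarrow> 'a set" and T'
  proof (rule Rcost_UN_disjoint[OF finI])
    fix i :: nat show "finite (S i)" using sub finK by (rule finite_subset)
  next
    fix i j :: nat assume "i \<noteq> j"
    then show "S i \<inter> S j = {}" using sub[of i] sub[of j] cluster_disjoint[of i j X \<rho> k c] by blast
  qed
  have per_cluster: "Rcost \<rho> (?K i) T
      \<le> Rcost \<rho> (?K i) ?C + (Rcost \<rho> (?K i \<inter> A) ?C + Rcost \<rho> (?K i \<inter> A) T) / \<theta>"
    if i: "i \<in> I" for i
  proof (rule Rcost_le_via_nearest_center[OF metric T cluster_subset])
    show "c i \<in> X" using C I i by auto
    show "distS \<rho> x ?C = \<rho> x (c i)" if "x \<in> ?K i" for x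
      using distS_centers_cluster[OF metric that C k] .
  qed (use \<theta> dense[OF i] in auto)
  have C': "finite ?C" "?C \<noteq> {}" "?C \<subseteq> X" using C k by auto
  have union_K: "Rcost \<rho> (\<Union>i\<in>I. ?K i) T' = (\<Sum>i\<in>I. Rcost \<rho> (?K i) T')" for T'
    by (rule union) simp
  have union_KA: "Rcost \<rho> (\<Union>i\<in>I. ?K i \<inter> A) T' = (\<Sum>i\<in>I. Rcost \<rho> (?K i \<inter> A) T')" for T'
    by (rule union) blast
  have "Rcost \<rho> (\<Union>i\<in>I. ?K i) T = (\<Sum>i\<in>I. Rcost \<rho> (?K i) T)"
    by (rule union_K)
  also have "\<dots> \<le> (\<Sum>i\<in>I. Rcost \<rho> (?K i) ?C
                      + (Rcost \<rho> (?K i \<inter> A) ?C + Rcost \<rho> (?K i \<inter> A) T) / \<theta>)"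
    by (rule sum_mono) (rule per_cluster)
  also have "\<dots> = Rcost \<rho> (\<Union>i\<in>I. ?K i) ?C
         + (Rcost \<rho> (\<Union>i\<in>I. ?K i \<inter> A) ?C + Rcost \<rho> (\<Union>i\<in>I. ?K i \<inter> A) T) / \<theta>"
    unfolding union_K union_KA by (simp add: sum.distrib sum_divide_distrib add_divide_distrib)
  also have "\<dots> \<le> Rcost \<rho> X ?C + (Rcost \<rho> A ?C + Rcost \<rho> A T) / \<theta>"
    using cluster_subset[of X \<rho> k c] A \<theta>
    by (intro add_mono divide_right_mono Rcost_mono[OF metric C'] Rcost_mono[OF metric T]) auto
  finally show ?thesis .
qed

lemma ln_32k_div_delta_pos: "1 \<le> k \<Longrightarrow> 0 < \<delta> \<Longrightarrow> \<delta> < 1 \<Longrightarrow> 0 < ln (32 * real k / \<delta>)"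
  by (simp add: field_simps)

lemma phi_pos: "1 \<le> k \<Longrightarrow> 0 < \<delta> \<Longrightarrow> \<delta> < 1 \<Longrightarrow> 0 < \<alpha> \<Longrightarrow> 0 < phi k \<delta> \<alpha>"
  unfolding phi_def using ln_32k_div_delta_pos by simp

lemma kplus_ge:
  "1 \<le> k \<Longrightarrow> 0 < \<delta> \<Longrightarrow> \<delta> < 1 \<Longrightarrow> 0 < \<alpha> \<Longrightarrow> real k + \<alpha> * phi k \<delta> \<alpha> / 4 \<le> kplus k \<delta>"
  unfolding phi_def kplus_def using ln_32k_div_delta_pos[of k \<delta>] by simp

lemma Xlarge_eq_empty:
  assumes "finite X" "real (card X) < phi k \<delta> \<alpha>"
  shows "Xlarge X \<rho> k c \<delta> \<alpha> = {}"
proof -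
  have "card (cluster X \<rho> k c i) \<le> card X" for i
    using assms(1) cluster_subset by (rule card_mono)
  then have "real (card (cluster X \<rho> k c i)) < phi k \<delta> \<alpha>" for i
    using assms(2) by (meson le_less_trans of_nat_le_iff)
  then show ?thesis unfolding Xlarge_def by (auto simp: not_le[symmetric])
qed

lemma Rcost_Xlarge_le:
  assumes metric: "finite_metric X \<rho>" and C: "c ` {1..k} \<subseteq> X" and k: "1 \<le> k"
    and T: "finite T" "T \<noteq> {}" "T \<subseteq> X" and A: "A \<subseteq> X" and E: "finite E"
    and ratio: "real (card A) / real (card X) = \<alpha>" and \<alpha>: "0 < \<alpha>"
    and wr: "\<And>i. i \<in> {1..k} \<Longrightarrow> phi k \<delta> \<alpha> \<le> real (card (cluster X \<rho> k c i)) \<Longrightarrow>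
               well_represented X A (cluster X \<rho> k c i)"
    and small: "real (card (E \<inter> A)) \<le> \<alpha> * phi k \<delta> \<alpha> / 4"
  shows "Rcost \<rho> (Xlarge X \<rho> k c \<delta> \<alpha>) T
           \<le> Rcost \<rho> X (c ` {1..k}) + (Rcost \<rho> (A - E) (c ` {1..k}) + Rcost \<rho> (A - E) T) / (\<alpha> / 4)"
proof -
  define I where "I = {i \<in> {1..k}. phi k \<delta> \<alpha> \<le> real (card (cluster X \<rho> k c i))}"
  have dense: "\<alpha> / 4 * real (card (cluster X \<rho> k c i)) \<le> real (card (cluster X \<rho> k c i \<inter> (A - E)))"
    if i: "i \<in> I" for i
  proof -
    have "\<alpha> * phi k \<delta> \<alpha> / 4 \<le> \<alpha> / 4 * real (card (cluster X \<rho> k c i))"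
      using i \<alpha> unfolding I_def by simp
    then show ?thesis
      using well_represented_Diff_card_ge[OF wr E, unfolded ratio] small i unfolding I_def by auto
  qed
  have "Xlarge X \<rho> k c \<delta> \<alpha> = (\<Union>i\<in>I. cluster X \<rho> k c i)"
    unfolding Xlarge_def I_def by blast
  then show ?thesis
    by (simp only:) (rule Rcost_UN_clusters_le[OF metric C T _ _ k],
                     use A \<alpha> dense in \<open>auto simp: I_def\<close>)
qed

theorem lemma7:
  fixes X :: "'a set" and \<rho> :: "'a \<Rightarrow> 'a \<Rightarrow> real" and k :: nat and \<delta> \<alpha> \<beta> :: real
    and c :: "nat \<Rightarrow> 'a" and P1 T\<alpha> :: "'a set" and L :: nat and B :: "nat \<Rightarrow> 'a set"
  assumes metric: "finite_metric X \<rho>"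
    and k: "k \<ge> 2" and delta: "0 < \<delta>" "\<delta> < 1"
    and OPT_in: "c ` {1..k} \<subseteq> X"
    and OPT_opt: "\<And>T. T \<subseteq> X \<Longrightarrow> T \<noteq> {} \<Longrightarrow> card T \<le> k \<Longrightarrow>
                    Rcost \<rho> X (c ` {1..k}) \<le> Rcost \<rho> X T"
    and alpha: "0 < \<alpha>" "\<alpha> \<le> 1 / 6" "\<alpha> * real (card X) \<in> \<int>"
    and P1: "P1 \<subseteq> X" "real (card P1) = \<alpha> * real (card X)"
    and beta: "\<beta> \<ge> 1"
    and Talpha: "T\<alpha> \<subseteq> P1" "T\<alpha> \<noteq> {}" "real (card T\<alpha>) \<le> kplus k \<delta>"
    and Talpha_approx: "\<And>T. T \<subseteq> P1 \<Longrightarrow> T \<noteq> {} \<Longrightarrow> real (card T) \<le> kplus k \<delta> \<Longrightarrow>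
                    Rcost \<rho> P1 T\<alpha> \<le> \<beta> * Rcost \<rho> P1 T"
    and bins: "linear_bin_division \<rho> (phi k \<delta> \<alpha> / 15) X (c ` {1..k}) L B"
    and bins_wr: "trivial_division (phi k \<delta> \<alpha> / 15) X \<or>
                  (\<forall>i\<in>{1..L}. well_represented X P1 (B i))"
    and clusters_wr: "\<And>i. i \<in> {1..k} \<Longrightarrow> real (card (cluster X \<rho> k c i)) \<ge> phi k \<delta> \<alpha> \<Longrightarrow>
                    well_represented X P1 (cluster X \<rho> k c i)"
  shows "Rcost \<rho> (Xlarge X \<rho> k c \<delta> \<alpha>) T\<alpha> \<le> (18 * \<beta> + 10) * Rcost \<rho> X (c ` {1..k})"
proof -
  let ?C = "c ` {1..k}" and ?A = "P1 - B 1"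
  have k1: "1 \<le> k" using k by simp
  have C: "finite ?C" "?C \<noteq> {}" "?C \<subseteq> X" using k1 OPT_in by auto
  have finX: "finite X" using finite_metric_finite[OF metric] .
  have R0: "0 \<le> Rcost \<rho> X ?C" using Rcost_nonneg[OF metric C] by simp
  show ?thesis
  proof (cases "trivial_division (phi k \<delta> \<alpha> / 15) X")
    case True
    then have "Xlarge X \<rho> k c \<delta> \<alpha> = {}"
      using phi_pos[OF k1 delta alpha(1)]
      by (intro Xlarge_eq_empty[OF finX]) (simp add: trivial_division_def)
    then show ?thesis using R0 beta by (simp add: Rcost_def)
  next
    case False
    then have nontrivial: "phi k \<delta> \<alpha> / 15 \<le> real (card X)"
      and wr: "\<forall>i\<in>{1..L}. well_represented X P1 (B i)"
      using bins_wr unfolding trivial_division_def by auto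
    have ratio: "real (card P1) / real (card X) = \<alpha>"
      using P1(2) finX C(2,3) by (auto simp: card_gt_0_iff)
    have "1 \<in> {1..L}" using bins unfolding linear_bin_division_def by auto
    then have first_bin: "real (card (B 1 \<inter> P1)) \<le> \<alpha> * phi k \<delta> \<alpha> / 4"
      using card_first_bin_Int_le[OF bins wr[rule_format] finX, unfolded ratio] by simp
    have beyond: "Rcost \<rho> ?A ?C \<le> 9 / 4 * \<alpha> * Rcost \<rho> X ?C"
      using Rcost_beyond_first_bin_le[OF metric C bins nontrivial P1(1) wr] ratio by simp
    have "real (card ?C + card (B 1 \<inter> P1)) \<le> kplus k \<delta>"
      using card_image_le[of "{1..k}" c] first_bin kplus_ge[OF k1 delta alpha(1)] by simp
    then have sample: "Rcost \<rho> P1 T\<alpha> \<le> 2 * \<beta> * Rcost \<rho> ?A ?C"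
      using Rcost_approx_le_twice[OF metric C P1(1) _ _ _ Talpha_approx] Talpha(1,2) beta by auto
    have Ta: "finite T\<alpha>" "T\<alpha> \<noteq> {}" "T\<alpha> \<subseteq> X"
      using finite_subset[of T\<alpha> X] Talpha(1,2) P1(1) finX by blast+
    have "B 1 \<subseteq> X" using bins unfolding linear_bin_division_def by auto
    then have large: "Rcost \<rho> (Xlarge X \<rho> k c \<delta> \<alpha>) T\<alpha>
        \<le> Rcost \<rho> X ?C + (Rcost \<rho> ?A ?C + Rcost \<rho> ?A T\<alpha>) / (\<alpha> / 4)"
      using finX first_bin clusters_wr
      by (intro Rcost_Xlarge_le[OF metric OPT_in k1 Ta P1(1) _ ratio alpha(1)]) (auto intro: finite_subset)
    have "Rcost \<rho> ?A T\<alpha> \<le> Rcost \<rho> P1 T\<alpha>" by (rule Rcost_mono[OF metric Ta]) (use P1(1) in auto)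
    then have "Rcost \<rho> ?A ?C + Rcost \<rho> ?A T\<alpha> \<le> (1 + 2 * \<beta>) * Rcost \<rho> ?A ?C"
      using sample by (simp add: algebra_simps)
    also have "\<dots> \<le> (1 + 2 * \<beta>) * (9 / 4 * \<alpha> * Rcost \<rho> X ?C)"
      using beyond beta by (intro mult_left_mono) auto
    finally have "(Rcost \<rho> ?A ?C + Rcost \<rho> ?A T\<alpha>) / (\<alpha> / 4) \<le> (18 * \<beta> + 9) * Rcost \<rho> X ?C"
      using alpha(1) by (simp add: field_simps)
    with large show ?thesis by (simp add: algebra_simps)
  qed
qed

end
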